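(* For every pair of positive integers $g,k$, every graph $G_{g,k}$ obtained by the construction described in the context has a proper edge-colouring in which each cycle contains no colour exactly once.
   Context: Hypergraph notions. A closed walk of length $\ell$ in a hypergraph $H$ is a sequence $v_0F_0v_1F_1\ldots F_{\ell-1}v_0$ with $v_i,v_{i+1}\in F_i$ for all $0\le i<\ell$ (indices mod $\ell$), $F_i\ne F_{i+1}$ for all $i$ (indices mod $\ell$), and $v_1,\ldots,v_{\ell-1}$ pairwise distinct. An $r$-uniform hypergraph $H$ is tranquil, witnessed by labellings $\lambda=\{\lambda_F\}_{F\in E(H)}$ with $\lambda_F:F\to\{1,\dots,r\}$, if for every closed walk $W=v_0F_0\ldots F_{\ell-1}v_0$ the multigraph on $\{1,\dots,r\}$ with edge multiset $\{\lambda_{F_i}(v_i)\lambda_{F_i}(v_{i+1}):0\le i<\ell\}$ is bridgeless. The chromatic number of a hypergraph is the least number of colours in a vertex colouring with no monochromatic hyperedge; its girth is the length of a shortest Berge cycle (distinct hyperedges $F_1,\dots,F_\ell$ and distinct vertices $x_1,\dots,x_\ell$ with $x_i\in F_i\cap F_{i+1}$, indices mod $\ell$). Construction. Fix a positive integer $g$. $G_{g,1}$ is a single vertex. For $k\ge 2$, given a graph $G_{g,k-1}$ obtained by the construction, with vertex set identified with $\{1,\dots,r\}$, take a finite tranquil $r$-uniform hypergraph $H$ with chromatic number at least $k$ and girth at least $\lceil g/3\rceil$, together with tranquility-witnessing labellings $\lambda_F$, each $\lambda_F:F\to\{1,\dots,r\}$ a bijection. The graph $G_{g,k}$ consists of an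 independent set $T$ with a bijection $\nu:T\to V(H)$, together with, for each hyperedge $F\in E(H)$, a disjoint copy $G_F$ of $G_{g,k-1}$; for each $F\in E(H)$ one adds the perfect matching between $G_F$ and $\nu^{-1}(F)$ joining the vertex of $G_F$ corresponding to $i\in\{1,\dots,r\}$ to the vertex $t\in\nu^{-1}(F)$ with $\lambda_F(\nu(t))=i$. No other edges are present. A proper edge-colouring gives adjacent edges distinct colours; "each cycle contains no colour exactly once" means that for every cycle $C$ and every colour $c$, the number of edges of $C$ coloured $c$ is not $1$. *)

theory Defs
  imports Complex_Main "HOL-Library.Multiset"
begin

definition simple_graph :: "'v set \<Rightarrow> 'v set set \<Rightarrow> bool" where
  "simple_graph V E \<longleftrightarrow> finite V \<and> (\<forall>e\<in>E. \<exists>x y. x \<in> V \<and> y \<in> V \<and> x \<noteq> y \<and> e = {x, y})"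

definition graph_iso :: "('v \<Rightarrow> 'w) \<Rightarrow> 'v set \<Rightarrow> 'v set set \<Rightarrow> 'w set \<Rightarrow> 'w set set \<Rightarrow> bool" where
  "graph_iso \<psi> V0 E0 V1 E1 \<longleftrightarrow> bij_betw \<psi> V0 V1 \<and>
     (\<forall>x\<in>V0. \<forall>y\<in>V0. {x, y} \<in> E0 \<longleftrightarrow> {\<psi> x, \<psi> y} \<in> E1)"

definition is_cycle :: "'v set set \<Rightarrow> (nat \<Rightarrow> 'v) \<Rightarrow> nat \<Rightarrow> bool" where
  "is_cycle E vs l \<longleftrightarrow> l \<ge> 3 \<and> inj_on vs {0..<l} \<and>
     (\<forall>i<l. {vs i, vs ((i + 1) mod l)} \<in> E)"

definition cycle_edges :: "(nat \<Rightarrow> 'v) \<Rightarrow> nat \<Rightarrow> 'v set set" where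
  "cycle_edges vs l = {{vs i, vs ((i + 1) mod l)} | i. i < l}"

definition proper_edge_colouring :: "'v set set \<Rightarrow> ('v set \<Rightarrow> 'c) \<Rightarrow> bool" where
  "proper_edge_colouring E c \<longleftrightarrow>
     (\<forall>e\<in>E. \<forall>e'\<in>E. e \<noteq> e' \<and> e \<inter> e' \<noteq> {} \<longrightarrow> c e \<noteq> c e')"

definition no_colour_once_on_cycles :: "'v set set \<Rightarrow> ('v set \<Rightarrow> 'c) \<Rightarrow> bool" where
  "no_colour_once_on_cycles E c \<longleftrightarrow>
     (\<forall>vs l. is_cycle E vs l \<longrightarrow> (\<forall>col. card {e \<in> cycle_edges vs l. c e = col} \<noteq> 1))"

definition uniform_hypergraph :: "nat \<Rightarrow> 'a set \<Rightarrow> 'a set set \<Rightarrow> bool" where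
  "uniform_hypergraph r V E \<longleftrightarrow> finite V \<and> (\<forall>F\<in>E. F \<subseteq> V \<and> card F = r)"

definition closed_walk :: "'a set set \<Rightarrow> (nat \<Rightarrow> 'a) \<Rightarrow> (nat \<Rightarrow> 'a set) \<Rightarrow> nat \<Rightarrow> bool" where
  "closed_walk E vs Fs l \<longleftrightarrow> l \<ge> 1 \<and>
     (\<forall>i<l. Fs i \<in> E \<and> vs i \<in> Fs i \<and> vs ((i + 1) mod l) \<in> Fs i
            \<and> Fs i \<noteq> Fs ((i + 1) mod l)) \<and>
     inj_on vs {1..<l}"

definition mg_connected :: "('b \<times> 'b) multiset \<Rightarrow> 'b \<Rightarrow> 'b \<Rightarrow> bool" where
  "mg_connected M a b \<longleftrightarrow> (a, b) \<in> (set_mset M \<union> (set_mset M)\<inverse>)\<^sup>*"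

definition mg_bridgeless :: "('b \<times> 'b) multiset \<Rightarrow> bool" where
  "mg_bridgeless M \<longleftrightarrow> (\<forall>e\<in>#M. mg_connected (M - {#e#}) (fst e) (snd e))"

definition walk_label_mset ::
  "('a set \<Rightarrow> 'a \<Rightarrow> nat) \<Rightarrow> (nat \<Rightarrow> 'a) \<Rightarrow> (nat \<Rightarrow> 'a set) \<Rightarrow> nat \<Rightarrow> (nat \<times> nat) multiset" where
  "walk_label_mset lab vs Fs l =
     image_mset (\<lambda>i. (lab (Fs i) (vs i), lab (Fs i) (vs ((i + 1) mod l)))) (mset_set {0..<l})"

definition tranquil_with :: "nat \<Rightarrow> 'a set \<Rightarrow> 'a set set \<Rightarrow> ('a set \<Rightarrow> 'a \<Rightarrow> nat) \<Rightarrow> bool" where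
  "tranquil_with r V E lab \<longleftrightarrow> uniform_hypergraph r V E \<and>
     (\<forall>F\<in>E. \<forall>v\<in>F. lab F v \<in> {1..r}) \<and>
     (\<forall>vs Fs l. closed_walk E vs Fs l \<longrightarrow> mg_bridgeless (walk_label_mset lab vs Fs l))"

definition hyp_colourable :: "'a set \<Rightarrow> 'a set set \<Rightarrow> nat \<Rightarrow> bool" where
  "hyp_colourable V E m \<longleftrightarrow>
     (\<exists>c. (\<forall>x\<in>V. c x < m) \<and> (\<forall>F\<in>E. \<exists>x\<in>F. \<exists>y\<in>F. c x \<noteq> c y))"

definition hyp_chromatic_ge :: "'a set \<Rightarrow> 'a set set \<Rightarrow> nat \<Rightarrow> bool" where
  "hyp_chromatic_ge V E k \<longleftrightarrow> (\<forall>m<k. \<not> hyp_colourable V E m)"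

definition berge_cycle :: "'a set set \<Rightarrow> nat \<Rightarrow> bool" where
  "berge_cycle E l \<longleftrightarrow> l \<ge> 2 \<and> (\<exists>Fs xs.
     (\<forall>i<l. Fs i \<in> E) \<and> inj_on Fs {0..<l} \<and> inj_on xs {0..<l} \<and>
     (\<forall>i<l. xs i \<in> Fs i \<inter> Fs ((i + 1) mod l)))"

definition hyp_girth_ge :: "'a set set \<Rightarrow> nat \<Rightarrow> bool" where
  "hyp_girth_ge E m \<longleftrightarrow> (\<forall>l. berge_cycle E l \<longrightarrow> l \<ge> m)"

inductive constructed :: "nat \<Rightarrow> nat \<Rightarrow> nat set \<Rightarrow> nat set set \<Rightarrow> bool" for g where
  base: "constructed g 1 {v} {}"
| step: "\<lbrakk> k \<ge> 1;
     constructed g k V0 E0;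
     r = card V0;
     bij_betw \<iota> {1..r} V0;
     tranquil_with r (VH :: nat set) EH lab;
     \<forall>F\<in>EH. bij_betw (lab F) F {1..r};
     hyp_chromatic_ge VH EH (Suc k);
     hyp_girth_ge EH (nat \<lceil>real g / 3\<rceil>);
     bij_betw \<nu> T VH;
     \<forall>F\<in>EH. simple_graph (GV F) (GE F) \<and> graph_iso (\<psi> F) V0 E0 (GV F) (GE F);
     \<forall>F\<in>EH. GV F \<inter> T = {};
     \<forall>F\<in>EH. \<forall>F'\<in>EH. F \<noteq> F' \<longrightarrow> GV F \<inter> GV F' = {};
     V = T \<union> (\<Union>F\<in>EH. GV F);
     E = (\<Union>F\<in>EH. GE F) \<union>
         {{\<psi> F (\<iota> i), t} | F i t. F \<in> EH \<and> t \<in> T \<and> \<nu> t \<in> F \<and> lab F (\<nu> t) = i} \<rbrakk>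
   \<Longrightarrow> constructed g (Suc k) V E"

end

theory Submission
  imports Defs
begin

(* By induction along the construction we prove the stronger property colour_separating:
   the two ends of an edge of colour k are not joined by a path avoiding k. A cycle meeting
   a colour exactly once would provide such a path.

   G_{g,k} is coloured as follows: inside every copy G_F the (separating) colouring of G_{g,k-1}
   is used, doubled, and all matching edges between G_F and T get the odd colour 2 idx F + 1,
   which belongs to F alone. Removing this odd colour cuts G_F off from everything else, which
   settles the matching edges. A path avoiding an even colour 2k can only pass between copies
   through T. Project it to H: inside a copy, the labels of the entry and exit vertices are
   joined in G_{g,k-1} by a path avoiding k, so the projection is a walk in H along which
   consecutive labels are related by an equivalence relation. By tranquility of H, every edge
   of the label multigraph of a closed walk lies on a cycle. Once the walk is shortened to a
   closed walk, the labels where it leaves and re-enters the starting copy are therefore related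
   too. This contradicts the induction hypothesis inside G_{g,k-1}. *)

definition bridgeless_closed_walks :: "'a set set \<Rightarrow> ('a set \<Rightarrow> 'a \<Rightarrow> nat) \<Rightarrow> bool" where
  "bridgeless_closed_walks EH lab \<longleftrightarrow>
     (\<forall>vs Fs l. closed_walk EH vs Fs l \<longrightarrow> mg_bridgeless (walk_label_mset lab vs Fs l))"

definition label_walk :: "'a set set \<Rightarrow> ('a set \<Rightarrow> 'a \<Rightarrow> nat) \<Rightarrow> (nat \<Rightarrow> nat \<Rightarrow> bool) \<Rightarrow>
    nat \<Rightarrow> (nat \<Rightarrow> 'a) \<Rightarrow> (nat \<Rightarrow> 'a set) \<Rightarrow> bool" where
  "label_walk EH lab L m ws hs \<longleftrightarrow>
     (\<forall>j<m. hs j \<in> EH \<and> ws j \<in> hs j \<and> ws (Suc j) \<in> hs j \<and> L (lab (hs j) (ws j)) (lab (hs j) (ws (Suc j))))"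

definition label_step :: "'a set set \<Rightarrow> ('a set \<Rightarrow> 'a \<Rightarrow> nat) \<Rightarrow> (nat \<Rightarrow> nat \<Rightarrow> bool) \<Rightarrow>
    'a \<Rightarrow> 'a \<Rightarrow> bool" where
  "label_step EH lab L v w \<longleftrightarrow> (\<exists>F\<in>EH. v \<in> F \<and> w \<in> F \<and> L (lab F v) (lab F w))"

lemma label_walk_prefix:
  "label_walk EH lab L m ws hs \<Longrightarrow> m' \<le> m \<Longrightarrow> label_walk EH lab L m' ws hs"
  unfolding label_walk_def by auto

lemma label_walk_suffix:
  "label_walk EH lab L m ws hs \<Longrightarrow> label_walk EH lab L (m - s) (\<lambda>i. ws (i + s)) (\<lambda>i. hs (i + s))"
  unfolding label_walk_def by (auto simp: less_diff_conv)

lemma label_walk_shortcut: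
  assumes walk: "label_walk EH lab L m ws hs" and "a + d < m"
    and "ws a \<in> hs (a + d)" and "L (lab (hs (a + d)) (ws a)) (lab (hs (a + d)) (ws (Suc (a + d))))"
  shows "label_walk EH lab L (m - d) (\<lambda>i. if i \<le> a then ws i else ws (i + d))
    (\<lambda>i. if i < a then hs i else hs (i + d))"
proof (unfold label_walk_def, intro allI impI, goal_cases)
  case (1 j)
  then consider "j < a" | "j = a" | "a < j" "j + d < m" by linarith
  then show ?case by cases (use walk assms(2-) in \<open>auto simp: label_walk_def\<close>)
qed

lemma label_walk_shorten:
  assumes walk: "label_walk EH lab L m ws hs" and "transp L"
    and "\<not> inj_on ws {1..m} \<or> (\<exists>j. Suc j < m \<and> hs j = hs (Suc j))"
  obtains m' ws' hs' where "m' < m" "label_walk EH lab L m' ws' hs'" "ws' 0 = ws 0" "ws' m' = ws m"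
proof -
  have step: "hs j \<in> EH \<and> ws j \<in> hs j \<and> ws (Suc j) \<in> hs j \<and> L (lab (hs j) (ws j)) (lab (hs j) (ws (Suc j)))"
    if "j < m" for j
    using walk that unfolding label_walk_def by blast
  from assms(3) consider a b where "1 \<le> a" "a < b" "b \<le> m" "ws a = ws b"
    | j where "Suc j < m" "hs j = hs (Suc j)"
    by (fastforce simp: inj_on_def linorder_neq_iff)
  then show ?thesis
  proof cases
    case (1 a b)
    show ?thesis
    proof (cases "b = m")
      case True
      then show ?thesis
        using that[of a ws hs] label_walk_prefix[OF walk] 1 by simp
    next
      case False
      have "label_walk EH lab L (m - (b - a)) (\<lambda>i. if i \<le> a then ws i else ws (i + (b - a)))
          (\<lambda>i. if i < a then hs i else hs (i + (b - a)))"
        using 1 False step[of b] by (intro label_walk_shortcut[OF walk]) auto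
      then show ?thesis
        by (rule that[rotated]) (use 1 False in auto)
    qed
  next
    case (2 j)
    then have "L (lab (hs j) (ws j)) (lab (hs j) (ws (Suc (Suc j))))"
      using step[of j] step[of "Suc j"] \<open>transp L\<close> by (metis transpD Suc_lessD)
    then have "label_walk EH lab L (m - 1) (\<lambda>i. if i \<le> j then ws i else ws (i + 1))
        (\<lambda>i. if i < j then hs i else hs (i + 1))"
      using 2 step[of j] step[of "Suc j"] by (intro label_walk_shortcut[OF walk]) auto
    then show ?thesis
      by (rule that[rotated]) (use 2 in auto)
  qed
qed

lemma rtranclp_label_stepE:
  assumes "(label_step EH lab L)\<^sup>*\<^sup>* v w"
  obtains m ws hs where "label_walk EH lab L m ws hs" "ws 0 = v" "ws m = w"
proof -
  obtain m ws where ws: "ws 0 = v" "ws m = w" "\<And>i. i < m \<Longrightarrow> label_step EH lab L (ws i) (ws (Suc i))"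
    using rtranclp_imp_relpowp[OF assms] by (auto simp: relpowp_fun_conv)
  then have "\<forall>i<m. \<exists>F\<in>EH. ws i \<in> F \<and> ws (Suc i) \<in> F \<and> L (lab F (ws i)) (lab F (ws (Suc i)))"
    unfolding label_step_def by blast
  then obtain hs where "label_walk EH lab L m ws hs"
    unfolding label_walk_def by metis
  with ws that show ?thesis by blast
qed

lemma equivp_mg_connected:
  assumes "equivp L" and "\<forall>p\<in>#M. L (fst p) (snd p)" and "mg_connected M a b"
  shows "L a b"
proof -
  have "(a, b) \<in> (set_mset M \<union> (set_mset M)\<inverse>)\<^sup>*"
    using assms(3) unfolding mg_connected_def .
  then show ?thesis
  proof (induction rule: rtrancl_induct)
    case base
    then show ?case using assms(1) by (simp add: equivp_reflp)
  next
    case (step b c)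
    then have "L b c" using assms(1,2) by (auto dest: equivp_symp)
    then show ?case using step.IH assms(1) by (blast dest: equivp_transp)
  qed
qed

lemma label_walk_closed_walk:
  assumes walk: "label_walk EH lab L m ws hs" and "0 < m" "F \<in> EH" "ws 0 \<in> F" "ws m \<in> F"
    and "\<forall>j<m. hs j \<noteq> F" "\<forall>j. Suc j < m \<longrightarrow> hs j \<noteq> hs (Suc j)" "inj_on ws {1..m}"
  shows "closed_walk EH ws (hs(m := F)) (Suc m)"
proof -
  have succ: "Suc i mod Suc m = (if i = m then 0 else Suc i)" if "i < Suc m" for i
    using that by auto
  show ?thesis
    using assms unfolding closed_walk_def label_walk_def
    by (auto simp: succ less_Suc_eq atLeastLessThanSuc_atLeastAtMost)
qed

lemma bridgeless_closed_label_walk: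
  assumes "bridgeless_closed_walks EH lab" and "equivp L"
    and walk: "label_walk EH lab L m ws hs" and "0 < m" "F \<in> EH" "ws 0 \<in> F" "ws m \<in> F"
    and "\<forall>j<m. hs j \<noteq> F" "\<forall>j. Suc j < m \<longrightarrow> hs j \<noteq> hs (Suc j)" "inj_on ws {1..m}"
  shows "L (lab F (ws 0)) (lab F (ws m))"
proof -
  define step where "step i = (lab (hs i) (ws i), lab (hs i) (ws (Suc i)))" for i
  have "walk_label_mset lab ws (hs(m := F)) (Suc m) =
      add_mset (lab F (ws m), lab F (ws 0)) (image_mset step (mset_set {0..<m}))"
    unfolding walk_label_mset_def step_def by (auto simp: atLeast0_lessThan_Suc intro!: image_mset_cong)
  moreover have "mg_bridgeless (walk_label_mset lab ws (hs(m := F)) (Suc m))"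
    using assms(1) label_walk_closed_walk[OF walk assms(4-)] unfolding bridgeless_closed_walks_def by blast
  ultimately have "mg_connected (image_mset step (mset_set {0..<m})) (lab F (ws m)) (lab F (ws 0))"
    unfolding mg_bridgeless_def by simp
  moreover have "\<forall>p\<in>#image_mset step (mset_set {0..<m}). L (fst p) (snd p)"
    using walk by (auto simp: step_def label_walk_def)
  ultimately show ?thesis
    using equivp_mg_connected \<open>equivp L\<close> by (metis equivp_symp)
qed

lemma bridgeless_label_walk:
  assumes bridgeless: "bridgeless_closed_walks EH lab" and L: "equivp L" and F: "F \<in> EH"
  shows "label_walk EH lab L m ws hs \<Longrightarrow> ws 0 \<in> F \<Longrightarrow> ws m \<in> F \<Longrightarrow> L (lab F (ws 0)) (lab F (ws m))"
proof (induction m arbitrary: ws hs rule: less_induct)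
  case (less m)
  note walk = \<open>label_walk EH lab L m ws hs\<close>
  consider "m = 0" | j where "j < m" "hs j = F"
    | "\<not> inj_on ws {1..m} \<or> (\<exists>j. Suc j < m \<and> hs j = hs (Suc j))"
    | "0 < m" "\<forall>j<m. hs j \<noteq> F" "\<forall>j. Suc j < m \<longrightarrow> hs j \<noteq> hs (Suc j)" "inj_on ws {1..m}"
    by blast
  then show ?case
  proof cases
    case 1
    then show ?thesis using L by (simp add: equivp_reflp)
  next
    case (2 j)
    have step: "ws j \<in> F" "ws (Suc j) \<in> F" "L (lab F (ws j)) (lab F (ws (Suc j)))"
      using walk 2 unfolding label_walk_def by auto
    have "L (lab F (ws 0)) (lab F (ws j))"
      using less.IH[of j ws hs] label_walk_prefix[OF walk] step 2 less.prems by simp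
    moreover have "L (lab F (ws (Suc j))) (lab F (ws m))"
      using less.IH[of "m - Suc j" "\<lambda>i. ws (i + Suc j)" "\<lambda>i. hs (i + Suc j)"]
        label_walk_suffix[OF walk, of "Suc j"] step 2 less.prems by simp
    ultimately show ?thesis
      using step L by (meson equivp_transp)
  next
    case 3
    have "transp L"
      using L by (simp add: equivp_reflp_symp_transp)
    then obtain m' ws' hs' where "m' < m" "label_walk EH lab L m' ws' hs'" "ws' 0 = ws 0" "ws' m' = ws m"
      using label_walk_shorten[OF walk _ 3] by blast
    then show ?thesis
      using less.IH less.prems by metis
  next
    case 4
    then show ?thesis
      using bridgeless_closed_label_walk[OF bridgeless L walk] F less.prems by blast
  qed
qed

lemma bridgeless_label_reachable:
  assumes "bridgeless_closed_walks EH lab" "equivp L" "F \<in> EH"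
    and "(label_step EH lab L)\<^sup>*\<^sup>* v w" "v \<in> F" "w \<in> F"
  shows "L (lab F v) (lab F w)"
  using assms(4) by (rule rtranclp_label_stepE) (use bridgeless_label_walk[OF assms(1-3)] assms(5,6) in blast)

definition avoid_colour :: "'v set set \<Rightarrow> ('v set \<Rightarrow> 'c) \<Rightarrow> 'c \<Rightarrow> ('v \<times> 'v) set" where
  "avoid_colour E c k = {(p, q). {p, q} \<in> E \<and> c {p, q} \<noteq> k}"

definition colour_separating :: "'v set set \<Rightarrow> ('v set \<Rightarrow> 'c) \<Rightarrow> bool" where
  "colour_separating E c \<longleftrightarrow> (\<forall>u v. {u, v} \<in> E \<longrightarrow> (u, v) \<notin> (avoid_colour E c (c {u, v}))\<^sup>*)"

lemma avoid_colour_rtrancl_sym: "(u, v) \<in> (avoid_colour E c k)\<^sup>* \<Longrightarrow> (v, u) \<in> (avoid_colour E c k)\<^sup>*"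
proof -
  have "sym (avoid_colour E c k)"
    unfolding sym_def avoid_colour_def by (auto simp: insert_commute)
  then show "(u, v) \<in> (avoid_colour E c k)\<^sup>* \<Longrightarrow> (v, u) \<in> (avoid_colour E c k)\<^sup>*"
    using sym_rtrancl by (blast dest: symD)
qed

lemma add_mod_neq:
  fixes i n l :: nat
  assumes "i < l" "0 < n" "n < l"
  shows "(i + n) mod l \<noteq> i"
proof
  assume "(i + n) mod l = i"
  then have "l dvd n"
    using assms(1) mod_eq_dvd_iff_nat[of i "i + n" l] by simp
  then show False using assms(2,3) by (simp add: nat_dvd_not_less)
qed

lemma cycle_edges_distinct:
  fixes l :: nat
  assumes "3 \<le> l" "inj_on vs {0..<l}" "i < l" "j < l" "i \<noteq> j"
  shows "{vs i, vs ((i + 1) mod l)} \<noteq> {vs j, vs ((j + 1) mod l)}"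
proof
  assume eq: "{vs i, vs ((i + 1) mod l)} = {vs j, vs ((j + 1) mod l)}"
  have "vs i \<noteq> vs j" using assms(2-5) by (auto dest: inj_onD)
  then have "vs i = vs ((j + 1) mod l)" "vs ((i + 1) mod l) = vs j"
    using eq by (auto simp: doubleton_eq_iff)
  then have "i = (j + 1) mod l" "(i + 1) mod l = j"
    using assms(1-4) by (auto dest: inj_onD)
  then have "(j + 2) mod l = j" by (simp add: mod_Suc_eq)
  then show False using add_mod_neq[of j l 2] assms(1,4) by simp
qed

lemma cycle_avoid_colour_path:
  fixes l :: nat
  assumes "is_cycle E vs l" "i < l" and other: "\<And>j. j < l \<Longrightarrow> j \<noteq> i \<Longrightarrow> c {vs j, vs ((j + 1) mod l)} \<noteq> col"
  shows "(vs ((i + 1) mod l), vs i) \<in> (avoid_colour E c col)\<^sup>*"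
proof -
  have l: "3 \<le> l" and edge: "\<And>j. j < l \<Longrightarrow> {vs j, vs ((j + 1) mod l)} \<in> E"
    using assms(1) unfolding is_cycle_def by auto
  have "(vs ((i + 1) mod l), vs ((i + 1 + n) mod l)) \<in> (avoid_colour E c col)\<^sup>*" if "n < l" for n
    using that
  proof (induction n)
    case (Suc n)
    define j where "j = (i + 1 + n) mod l"
    have "j < l" "j \<noteq> i"
      using l assms(2) Suc.prems add_mod_neq[of i l "Suc n"] by (auto simp: j_def)
    then have "(vs j, vs ((j + 1) mod l)) \<in> avoid_colour E c col"
      using edge other unfolding avoid_colour_def by blast
    moreover have "(j + 1) mod l = (i + 1 + Suc n) mod l"
      unfolding j_def by (simp add: mod_Suc_eq)
    ultimately show ?case using Suc by (auto simp: j_def intro: rtrancl_into_rtrancl)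
  qed simp
  from this[of "l - 1"] show ?thesis
    using assms(2) l by simp
qed

lemma colour_separating_no_colour_once:
  assumes "colour_separating E c"
  shows "no_colour_once_on_cycles E c"
  unfolding no_colour_once_on_cycles_def
proof (intro allI impI notI)
  fix vs l col
  assume cyc: "is_cycle E vs l" and once: "card {e \<in> cycle_edges vs l. c e = col} = 1"
  have l: "3 \<le> l" and inj: "inj_on vs {0..<l}" and edge: "\<And>i. i < l \<Longrightarrow> {vs i, vs ((i + 1) mod l)} \<in> E"
    using cyc unfolding is_cycle_def by auto
  obtain e where e: "{e \<in> cycle_edges vs l. c e = col} = {e}"
    using once card_1_singletonE by blast
  then obtain i where i: "i < l" "e = {vs i, vs ((i + 1) mod l)}" "c e = col"
    unfolding cycle_edges_def by blast
  have other: "c {vs j, vs ((j + 1) mod l)} \<noteq> col" if "j < l" "j \<noteq> i" for j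
  proof
    assume "c {vs j, vs ((j + 1) mod l)} = col"
    then have "{vs j, vs ((j + 1) mod l)} \<in> {e \<in> cycle_edges vs l. c e = col}"
      using that(1) unfolding cycle_edges_def by blast
    then show False
      using e i(2) cycle_edges_distinct[OF l inj i(1) that(1)] that(2) by auto
  qed
  have "(vs ((i + 1) mod l), vs i) \<in> (avoid_colour E c col)\<^sup>*"
    using cyc i(1) other by (rule cycle_avoid_colour_path)
  moreover have "{vs ((i + 1) mod l), vs i} \<in> E" "c {vs ((i + 1) mod l), vs i} = col"
    using edge[OF i(1)] i by (auto simp: insert_commute)
  ultimately show False
    using assms unfolding colour_separating_def by blast
qed

locale construction_step =
  fixes V0 :: "'a set" and E0 :: "'a set set" and r :: nat and \<iota> :: "nat \<Rightarrow> 'a"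
    and EH :: "'b set set" and lab :: "'b set \<Rightarrow> 'b \<Rightarrow> nat" and T :: "'c set" and \<nu> :: "'c \<Rightarrow> 'b"
    and GV :: "'b set \<Rightarrow> 'c set" and GE :: "'b set \<Rightarrow> 'c set set" and \<psi> :: "'b set \<Rightarrow> 'a \<Rightarrow> 'c"
    and E :: "'c set set"
  assumes iota_bij: "bij_betw \<iota> {1..r} V0"
    and bridgeless: "bridgeless_closed_walks EH lab"
    and lab_bij: "F \<in> EH \<Longrightarrow> bij_betw (lab F) F {1..r}"
    and nu_inj: "inj_on \<nu> T"
    and copy_simple: "F \<in> EH \<Longrightarrow> simple_graph (GV F) (GE F)"
    and copy_iso: "F \<in> EH \<Longrightarrow> graph_iso (\<psi> F) V0 E0 (GV F) (GE F)"
    and copy_disjoint_T: "F \<in> EH \<Longrightarrow> GV F \<inter> T = {}"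
    and copies_disjoint: "F \<in> EH \<Longrightarrow> F' \<in> EH \<Longrightarrow> F \<noteq> F' \<Longrightarrow> GV F \<inter> GV F' = {}"
    and E_eq: "E = (\<Union>F\<in>EH. GE F) \<union>
      {{\<psi> F (\<iota> i), t} | F i t. F \<in> EH \<and> t \<in> T \<and> \<nu> t \<in> F \<and> lab F (\<nu> t) = i}"
begin

definition partner :: "'b set \<Rightarrow> 'c \<Rightarrow> 'c" where
  "partner F t = \<psi> F (\<iota> (lab F (\<nu> t)))"

lemma GV_unique: "F \<in> EH \<Longrightarrow> F' \<in> EH \<Longrightarrow> p \<in> GV F \<Longrightarrow> p \<in> GV F' \<Longrightarrow> F = F'"
  using copies_disjoint by blast

lemma psi_in_GV: "F \<in> EH \<Longrightarrow> x \<in> V0 \<Longrightarrow> \<psi> F x \<in> GV F"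
  using copy_iso unfolding graph_iso_def by (meson bij_betw_apply)

lemma psi_notin_T: "F \<in> EH \<Longrightarrow> x \<in> V0 \<Longrightarrow> \<psi> F x \<notin> T"
  using psi_in_GV copy_disjoint_T by blast

lemma psi_inj:
  "F \<in> EH \<Longrightarrow> F' \<in> EH \<Longrightarrow> x \<in> V0 \<Longrightarrow> y \<in> V0 \<Longrightarrow> \<psi> F x = \<psi> F' y \<Longrightarrow> F = F' \<and> x = y"
  using GV_unique psi_in_GV copy_iso unfolding graph_iso_def bij_betw_def by (metis inj_onD)

lemma iota_lab_in_V0: "F \<in> EH \<Longrightarrow> v \<in> F \<Longrightarrow> \<iota> (lab F v) \<in> V0"
  using lab_bij iota_bij by (meson bij_betw_apply)

lemma partner_in_GV: "F \<in> EH \<Longrightarrow> \<nu> t \<in> F \<Longrightarrow> partner F t \<in> GV F"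
  unfolding partner_def using psi_in_GV iota_lab_in_V0 by blast

lemma partner_notin_T: "F \<in> EH \<Longrightarrow> \<nu> t \<in> F \<Longrightarrow> partner F t \<notin> T"
  using partner_in_GV copy_disjoint_T by blast

lemma partner_inj:
  assumes "F \<in> EH" "t \<in> T" "t' \<in> T" "\<nu> t \<in> F" "\<nu> t' \<in> F" "partner F t = partner F t'"
  shows "t = t'"
proof -
  have "\<iota> (lab F (\<nu> t)) = \<iota> (lab F (\<nu> t'))"
    using assms psi_inj iota_lab_in_V0 unfolding partner_def by blast
  then have "lab F (\<nu> t) = lab F (\<nu> t')"
    using assms(1,4,5) lab_bij iota_bij by (metis bij_betw_apply bij_betw_imp_inj_on inj_onD)
  then show ?thesis
    using assms(1-5) lab_bij nu_inj by (metis bij_betw_imp_inj_on inj_onD)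
qed

lemma copy_edgeE:
  assumes "F \<in> EH" "e \<in> GE F"
  obtains x y where "x \<in> V0" "y \<in> V0" "{x, y} \<in> E0" "e = {\<psi> F x, \<psi> F y}"
proof -
  have "GV F = \<psi> F ` V0" and iso: "\<forall>x\<in>V0. \<forall>y\<in>V0. {x, y} \<in> E0 \<longleftrightarrow> {\<psi> F x, \<psi> F y} \<in> GE F"
    using copy_iso[OF assms(1)] unfolding graph_iso_def bij_betw_def by auto
  moreover obtain p q where "p \<in> GV F" "q \<in> GV F" "e = {p, q}"
    using copy_simple[OF assms(1)] assms(2) unfolding simple_graph_def by blast
  ultimately obtain x y where "x \<in> V0" "y \<in> V0" "e = {\<psi> F x, \<psi> F y}"
    by (metis imageE)
  with iso assms(2) that show ?thesis by simp
qed

lemma edgeE: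
  assumes "e \<in> E"
  obtains (copy) F x y where "F \<in> EH" "x \<in> V0" "y \<in> V0" "{x, y} \<in> E0" "e = {\<psi> F x, \<psi> F y}"
    | (matching) F t where "F \<in> EH" "t \<in> T" "\<nu> t \<in> F" "e = {partner F t, t}"
proof -
  from assms consider F where "F \<in> EH" "e \<in> GE F"
    | F t where "F \<in> EH" "t \<in> T" "\<nu> t \<in> F" "e = {partner F t, t}"
    unfolding E_eq partner_def by blast
  then show ?thesis
    by cases (metis copy_edgeE that)+
qed

lemma adjacentE:
  assumes "{z, z'} \<in> E"
  obtains (copy) F x y where "F \<in> EH" "x \<in> V0" "y \<in> V0" "{x, y} \<in> E0" "z = \<psi> F x" "z' = \<psi> F y"
    | (enter) F t where "F \<in> EH" "t \<in> T" "\<nu> t \<in> F" "z = t" "z' = partner F t"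
    | (leave) F t where "F \<in> EH" "t \<in> T" "\<nu> t \<in> F" "z = partner F t" "z' = t"
  using assms
proof (cases rule: edgeE)
  case (copy F x y)
  have "{y, x} \<in> E0"
    using copy(4) by (simp add: insert_commute)
  moreover have "z = \<psi> F x \<and> z' = \<psi> F y \<or> z = \<psi> F y \<and> z' = \<psi> F x"
    using copy(5) by (simp add: doubleton_eq_iff)
  ultimately show ?thesis
    using that(1) copy(1-4) by metis
next
  case (matching F t)
  then have "z = partner F t \<and> z' = t \<or> z = t \<and> z' = partner F t"
    by (simp add: doubleton_eq_iff)
  then show ?thesis
    using that(2,3) matching(1-3) by metis
qed

lemma copy_edges_meet:
  assumes "F \<in> EH" "F' \<in> EH" "x \<in> V0" "y \<in> V0" "x' \<in> V0" "y' \<in> V0"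
    and "e = {\<psi> F x, \<psi> F y}" "e' = {\<psi> F' x', \<psi> F' y'}" "e \<noteq> e'" "e \<inter> e' \<noteq> {}"
  shows "{x, y} \<noteq> {x', y'}" "{x, y} \<inter> {x', y'} \<noteq> {}"
proof -
  obtain p where "p \<in> e" "p \<in> e'"
    using assms(10) by blast
  then obtain a b where "a \<in> {x, y}" "b \<in> {x', y'}" "\<psi> F a = \<psi> F' b"
    using assms(7,8) by blast
  moreover have "a \<in> V0" "b \<in> V0"
    using \<open>a \<in> {x, y}\<close> \<open>b \<in> {x', y'}\<close> assms(3-6) by auto
  ultimately have "F = F'" "a = b"
    using psi_inj[of F F' a b] assms(1,2) by simp_all
  have "e = \<psi> F ` {x, y}" "e' = \<psi> F' ` {x', y'}"
    using assms(7,8) by simp_all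
  then show "{x, y} \<noteq> {x', y'}"
    using assms(9) \<open>F = F'\<close> by metis
  show "{x, y} \<inter> {x', y'} \<noteq> {}"
    using \<open>a \<in> {x, y}\<close> \<open>b \<in> {x', y'}\<close> \<open>a = b\<close> by blast
qed

lemma matching_edges_meet:
  assumes "F \<in> EH" "F' \<in> EH" "t \<in> T" "t' \<in> T" "\<nu> t \<in> F" "\<nu> t' \<in> F'"
    and "{partner F t, t} \<noteq> {partner F' t', t'}" "{partner F t, t} \<inter> {partner F' t', t'} \<noteq> {}"
  shows "F \<noteq> F'"
proof
  assume "F = F'"
  have "partner F t \<notin> T" "partner F t' \<notin> T"
    using partner_notin_T assms(1,5,6) \<open>F = F'\<close> by simp_all
  then have "t = t'"
    using partner_inj[of F t t'] assms \<open>F = F'\<close> by auto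
  then show False
    using assms(7) \<open>F = F'\<close> by simp
qed

end

locale construction_step_colouring = construction_step +
  fixes c0 :: "'a set \<Rightarrow> nat" and idx :: "'b set \<Rightarrow> nat"
  assumes c0_proper: "proper_edge_colouring E0 c0"
    and c0_separating: "colour_separating E0 c0"
    and idx_inj: "inj_on idx EH"
begin

definition copy_of :: "'c set \<Rightarrow> 'b set" where
  "copy_of e = (THE F. F \<in> EH \<and> e \<inter> GV F \<noteq> {})"

definition colouring :: "'c set \<Rightarrow> nat" where
  "colouring e = (if e \<inter> T = {} then 2 * c0 (inv_into V0 (\<psi> (copy_of e)) ` e) else Suc (2 * idx (copy_of e)))"

lemma copy_of_eq: "F \<in> EH \<Longrightarrow> e \<subseteq> GV F \<union> T \<Longrightarrow> e \<inter> GV F \<noteq> {} \<Longrightarrow> copy_of e = F"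
  unfolding copy_of_def using GV_unique copy_disjoint_T by (intro the_equality) blast+

lemma colouring_copy:
  assumes "F \<in> EH" "x \<in> V0" "y \<in> V0"
  shows "colouring {\<psi> F x, \<psi> F y} = 2 * c0 {x, y}"
proof -
  have "copy_of {\<psi> F x, \<psi> F y} = F"
    using assms psi_in_GV by (intro copy_of_eq) auto
  moreover have "inj_on (\<psi> F) V0"
    using copy_iso[OF assms(1)] unfolding graph_iso_def bij_betw_def by blast
  ultimately show ?thesis
    using assms psi_notin_T unfolding colouring_def by auto
qed

lemma colouring_matching:
  assumes "F \<in> EH" "t \<in> T" "\<nu> t \<in> F"
  shows "colouring {partner F t, t} = Suc (2 * idx F)"
proof -
  have "copy_of {partner F t, t} = F"
    using assms partner_in_GV by (intro copy_of_eq) auto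
  then show ?thesis
    using assms unfolding colouring_def by auto
qed

lemma proper_colouring: "proper_edge_colouring E colouring"
  unfolding proper_edge_colouring_def
proof (intro ballI impI)
  fix e e' assume "e \<in> E" "e' \<in> E" and meet: "e \<noteq> e' \<and> e \<inter> e' \<noteq> {}"
  from \<open>e \<in> E\<close> \<open>e' \<in> E\<close> show "colouring e \<noteq> colouring e'"
  proof (cases rule: edgeE[case_product edgeE])
    case (copy_copy F x y F' x' y')
    then have "{x, y} \<noteq> {x', y'}" "{x, y} \<inter> {x', y'} \<noteq> {}"
      using copy_edges_meet[of F F' x y x' y' e e'] meet by blast+
    then have "c0 {x, y} \<noteq> c0 {x', y'}"
      using c0_proper \<open>{x, y} \<in> E0\<close> \<open>{x', y'} \<in> E0\<close> unfolding proper_edge_colouring_def by simp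
    then show ?thesis
      using colouring_copy copy_copy by simp
  next
    case (copy_matching F x y F' t')
    then have "colouring e = 2 * c0 {x, y}" "colouring e' = Suc (2 * idx F')"
      using colouring_copy colouring_matching by simp_all
    then show ?thesis by presburger
  next
    case (matching_copy F t F' x' y')
    then have "colouring e = Suc (2 * idx F)" "colouring e' = 2 * c0 {x', y'}"
      using colouring_copy colouring_matching by simp_all
    then show ?thesis by presburger
  next
    case (matching_matching F t F' t')
    then have "F \<noteq> F'"
      using matching_edges_meet[of F F' t t'] meet by blast
    then show ?thesis
      using colouring_matching matching_matching idx_inj by (auto dest: inj_onD)
  qed
qed

definition label_conn :: "nat \<Rightarrow> nat \<Rightarrow> nat \<Rightarrow> bool" where
  "label_conn k i j \<longleftrightarrow> (\<iota> i, \<iota> j) \<in> (avoid_colour E0 c0 k)\<^sup>*"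

lemma equivp_label_conn: "equivp (label_conn k)"
  unfolding label_conn_def
  by (intro equivpI reflpI sympI transpI) (auto intro: avoid_colour_rtrancl_sym rtrancl_trans)

text \<open>Invariant along paths avoiding colour \<open>2 * k\<close> that start at \<open>\<psi> F (\<iota> (lab F v0))\<close>, \<open>v0 \<in> F\<close>.\<close>

definition reached :: "nat \<Rightarrow> 'b \<Rightarrow> 'c \<Rightarrow> bool" where
  "reached k v0 z \<longleftrightarrow>
     (z \<in> T \<longrightarrow> (label_step EH lab (label_conn k))\<^sup>*\<^sup>* v0 (\<nu> z)) \<and>
     (\<forall>F\<in>EH. \<forall>y\<in>V0. z = \<psi> F y \<longrightarrow>
        (\<exists>w\<in>F. (label_step EH lab (label_conn k))\<^sup>*\<^sup>* v0 w \<and> (\<iota> (lab F w), y) \<in> (avoid_colour E0 c0 k)\<^sup>*))"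

lemma reached_copyI:
  assumes "F \<in> EH" "y \<in> V0" "w \<in> F" "(label_step EH lab (label_conn k))\<^sup>*\<^sup>* v0 w"
    and "(\<iota> (lab F w), y) \<in> (avoid_colour E0 c0 k)\<^sup>*"
  shows "reached k v0 (\<psi> F y)"
  unfolding reached_def
proof (intro conjI ballI impI)
  show "\<psi> F y \<in> T \<Longrightarrow> (label_step EH lab (label_conn k))\<^sup>*\<^sup>* v0 (\<nu> (\<psi> F y))"
    using psi_notin_T assms(1,2) by blast
  fix F' y' assume "F' \<in> EH" "y' \<in> V0" "\<psi> F y = \<psi> F' y'"
  then have "F' = F" "y' = y"
    using psi_inj[of F F' y y'] assms(1,2) by simp_all
  then show "\<exists>w\<in>F'. (label_step EH lab (label_conn k))\<^sup>*\<^sup>* v0 w \<and> (\<iota> (lab F' w), y') \<in> (avoid_colour E0 c0 k)\<^sup>*"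
    using assms(3-5) by blast
qed

lemma reached_copyE:
  assumes "reached k v0 (\<psi> F y)" "F \<in> EH" "y \<in> V0"
  obtains w where "w \<in> F" "(label_step EH lab (label_conn k))\<^sup>*\<^sup>* v0 w"
    "(\<iota> (lab F w), y) \<in> (avoid_colour E0 c0 k)\<^sup>*"
  using assms unfolding reached_def by blast

lemma reached_TI: "t \<in> T \<Longrightarrow> (label_step EH lab (label_conn k))\<^sup>*\<^sup>* v0 (\<nu> t) \<Longrightarrow> reached k v0 t"
  using psi_notin_T unfolding reached_def by blast

lemma reached_copy_step:
  assumes "reached k v0 (\<psi> F x)" "F \<in> EH" "x \<in> V0" "y \<in> V0" "(x, y) \<in> avoid_colour E0 c0 k"
  shows "reached k v0 (\<psi> F y)"
proof -
  obtain w where "w \<in> F" "(label_step EH lab (label_conn k))\<^sup>*\<^sup>* v0 w"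
    "(\<iota> (lab F w), x) \<in> (avoid_colour E0 c0 k)\<^sup>*"
    using assms(1-3) by (rule reached_copyE)
  then show ?thesis
    using assms(2,4,5) by (auto intro: reached_copyI rtrancl_into_rtrancl)
qed

lemma reached_enter:
  assumes "reached k v0 t" "F \<in> EH" "t \<in> T" "\<nu> t \<in> F"
  shows "reached k v0 (partner F t)"
proof -
  have "(label_step EH lab (label_conn k))\<^sup>*\<^sup>* v0 (\<nu> t)"
    using assms(1,3) unfolding reached_def by blast
  then show ?thesis
    using assms(2,4) iota_lab_in_V0 unfolding partner_def by (intro reached_copyI[where w = "\<nu> t"]) auto
qed

lemma reached_leave:
  assumes "reached k v0 (partner F t)" "F \<in> EH" "t \<in> T" "\<nu> t \<in> F"
  shows "reached k v0 t"
proof -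
  obtain w where "w \<in> F" and reach: "(label_step EH lab (label_conn k))\<^sup>*\<^sup>* v0 w"
    and "(\<iota> (lab F w), \<iota> (lab F (\<nu> t))) \<in> (avoid_colour E0 c0 k)\<^sup>*"
    using assms(1) unfolding partner_def by (rule reached_copyE) (use assms(2,4) iota_lab_in_V0 in auto)
  then have "label_step EH lab (label_conn k) w (\<nu> t)"
    using assms(2,4) unfolding label_step_def label_conn_def by blast
  with reach have "(label_step EH lab (label_conn k))\<^sup>*\<^sup>* v0 (\<nu> t)"
    by (rule rtranclp.rtrancl_into_rtrancl)
  then show ?thesis
    using assms(3) reached_TI by blast
qed

lemma reached_along_avoid_path:
  assumes "F \<in> EH" "v0 \<in> F" and "(\<psi> F (\<iota> (lab F v0)), z) \<in> (avoid_colour E colouring (2 * k))\<^sup>*"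
  shows "reached k v0 z"
  using assms(3)
proof (induction rule: rtrancl_induct)
  case base
  show ?case
    using assms(1,2) iota_lab_in_V0 by (intro reached_copyI) auto
next
  case (step z z')
  then have "{z, z'} \<in> E" and colour: "colouring {z, z'} \<noteq> 2 * k"
    unfolding avoid_colour_def by auto
  then show ?case
  proof (cases rule: adjacentE)
    case (copy F' x y)
    then have "(x, y) \<in> avoid_colour E0 c0 k"
      using colour colouring_copy unfolding avoid_colour_def by auto
    then show ?thesis
      using reached_copy_step step.IH copy by blast
  next
    case (enter F' t)
    then show ?thesis
      using reached_enter step.IH by blast
  next
    case (leave F' t)
    then show ?thesis
      using reached_leave step.IH by blast
  qed
qed

lemma copy_edge_separated:
  assumes "F \<in> EH" "x \<in> V0" "y \<in> V0" "{x, y} \<in> E0"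
  shows "(\<psi> F x, \<psi> F y) \<notin> (avoid_colour E colouring (2 * c0 {x, y}))\<^sup>*"
proof
  let ?k = "c0 {x, y}"
  assume path: "(\<psi> F x, \<psi> F y) \<in> (avoid_colour E colouring (2 * ?k))\<^sup>*"
  obtain v0 where "v0 \<in> F" "\<iota> (lab F v0) = x"
    using assms(1,2) lab_bij iota_bij by (metis bij_betw_def imageE)
  then have "reached ?k v0 (\<psi> F y)"
    using reached_along_avoid_path assms(1) path by simp
  then obtain w where "w \<in> F" "(label_step EH lab (label_conn ?k))\<^sup>*\<^sup>* v0 w"
    and wy: "(\<iota> (lab F w), y) \<in> (avoid_colour E0 c0 ?k)\<^sup>*"
    using assms(1,3) by (rule reached_copyE)
  then have "label_conn ?k (lab F v0) (lab F w)"
    using bridgeless_label_reachable[OF bridgeless equivp_label_conn assms(1)] \<open>v0 \<in> F\<close> by blast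
  then have "(x, y) \<in> (avoid_colour E0 c0 ?k)\<^sup>*"
    using \<open>\<iota> (lab F v0) = x\<close> wy unfolding label_conn_def by auto
  then show False
    using c0_separating assms(4) unfolding colour_separating_def by blast
qed

lemma avoid_matching_colour_stays_in_copy:
  assumes "F \<in> EH" "p \<in> GV F" and "(p, q) \<in> (avoid_colour E colouring (Suc (2 * idx F)))\<^sup>*"
  shows "q \<in> GV F"
  using assms(3)
proof (induction rule: rtrancl_induct)
  case base
  show ?case by (fact assms(2))
next
  case (step q q')
  then have "{q, q'} \<in> E" and colour: "colouring {q, q'} \<noteq> Suc (2 * idx F)"
    unfolding avoid_colour_def by auto
  then show ?case
  proof (cases rule: adjacentE)
    case (copy F' x y)
    then have "q \<in> GV F'"
      using psi_in_GV by simp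
    then have "F' = F"
      using GV_unique[of F' F q] copy(1) assms(1) step.IH by simp
    then show ?thesis
      using copy psi_in_GV by simp
  next
    case (enter F' t)
    then show ?thesis
      using step.IH copy_disjoint_T assms(1) by blast
  next
    case (leave F' t)
    then have "q \<in> GV F'"
      using partner_in_GV by simp
    then have "F' = F"
      using GV_unique[of F' F q] leave(1) assms(1) step.IH by simp
    then show ?thesis
      using leave colour colouring_matching by simp
  qed
qed

lemma colouring_separating: "colour_separating E colouring"
  unfolding colour_separating_def
proof (intro allI impI)
  fix u v assume "{u, v} \<in> E"
  then show "(u, v) \<notin> (avoid_colour E colouring (colouring {u, v}))\<^sup>*"
  proof (cases rule: adjacentE)
    case (copy F x y)
    then show ?thesis
      using copy_edge_separated colouring_copy by simp
  next
    case (enter F t)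
    have "colouring {u, v} = Suc (2 * idx F)"
      using enter colouring_matching by (simp add: insert_commute)
    moreover have "t \<notin> GV F"
      using enter copy_disjoint_T by blast
    then have "(partner F t, t) \<notin> (avoid_colour E colouring (Suc (2 * idx F)))\<^sup>*"
      using avoid_matching_colour_stays_in_copy[of F "partner F t" t] enter partner_in_GV by blast
    ultimately show ?thesis
      using enter(4,5) by (auto dest: avoid_colour_rtrancl_sym)
  next
    case (leave F t)
    have "t \<notin> GV F"
      using leave copy_disjoint_T by blast
    then have "(partner F t, t) \<notin> (avoid_colour E colouring (Suc (2 * idx F)))\<^sup>*"
      using avoid_matching_colour_stays_in_copy[of F "partner F t" t] leave partner_in_GV by blast
    then show ?thesis
      using leave colouring_matching by simp
  qed
qed

end

lemma constructed_colouring: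
  assumes "constructed g k V E"
  shows "\<exists>c :: nat set \<Rightarrow> nat. proper_edge_colouring E c \<and> colour_separating E c"
  using assms
proof (induction rule: constructed.induct)
  case (base v)
  show ?case
    unfolding proper_edge_colouring_def colour_separating_def by simp
next
  case (step k V0 E0 r \<iota> VH EH lab \<nu> T GV GE \<psi> V E)
  obtain c0 :: "nat set \<Rightarrow> nat" where c0: "proper_edge_colouring E0 c0" "colour_separating E0 c0"
    using step.IH by blast
  have "finite EH"
    using \<open>tranquil_with r VH EH lab\<close> unfolding tranquil_with_def uniform_hypergraph_def
    by (meson Pow_iff finite_Pow_iff rev_finite_subset subsetI)
  then obtain idx :: "nat set \<Rightarrow> nat" where idx: "inj_on idx EH"
    using finite_imp_inj_to_nat_seg by blast
  have bridgeless: "bridgeless_closed_walks EH lab"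
    using \<open>tranquil_with r VH EH lab\<close> unfolding tranquil_with_def bridgeless_closed_walks_def by blast
  have nu: "inj_on \<nu> T"
    using \<open>bij_betw \<nu> T VH\<close> by (rule bij_betw_imp_inj_on)
  interpret construction_step_colouring V0 E0 r \<iota> EH lab T \<nu> GV GE \<psi> E c0 idx
    by unfold_locales (fact step.hyps(14) | use step.hyps(4,6,10-12) c0 idx bridgeless nu in blast)+
  show ?case
    using proper_colouring colouring_separating by blast
qed

theorem lemma4p1:
  fixes g k :: nat and V :: "nat set" and E :: "nat set set"
  assumes "g \<ge> 1" and "k \<ge> 1" and "constructed g k V E"
  shows "\<exists>c :: nat set \<Rightarrow> nat. proper_edge_colouring E c \<and> no_colour_once_on_cycles E c"
  using constructed_colouring[OF assms(3)] colour_separating_no_colour_once by blast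

end
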